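(* Let $\alpha\in(0,1/2)$, $p_0=P(Y=1\mid D=0)$, $p_1=P(Y=1\mid D=1)$. In the binary model, the set $\{-1,1\}$ is a valid $(1-\alpha)$ prediction set given the observed data if and only if $p_1-p_0\ge1-\alpha$ or $p_0-p_1\ge1-\alpha$; in the first case $\{1\}$, and in the second case $\{-1\}$, is also a valid $(1-\alpha)$ prediction set given the observed data.
   Context: Binary treatment/outcome model: treatment $D\in\{0,1\}$ randomized; $Y_0,Y_1\in\{0,1\}$ potential outcomes; $\mathrm{ITE}=Y_1-Y_0\in\{-1,0,1\}$. A joint distribution of $(Y_0,Y_1)$ is compatible with the observed data if $P(Y_0=1)=p_0$ and $P(Y_1=1)=p_1$. A set $S$ is a valid $(1-\alpha)$ prediction set given the observed data if $P(Y_1-Y_0\in S)\ge1-\alpha$ for every compatible joint distribution. *)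

theory Defs
  imports "HOL-Probability.Probability"
begin

text \<open>A joint distribution of the potential outcomes (Y0, Y1) is a probability
  mass function on pairs of integers supported on {0,1} x {0,1}; the first
  component is Y0, the second Y1.\<close>

definition compatible :: "real \<Rightarrow> real \<Rightarrow> (int \<times> int) pmf \<Rightarrow> bool" where
  "compatible p0 p1 J \<longleftrightarrow>
     set_pmf J \<subseteq> {0,1} \<times> {0,1} \<and>
     measure_pmf.prob J {y. fst y = 1} = p0 \<and>
     measure_pmf.prob J {y. snd y = 1} = p1"

definition valid_pred_set :: "real \<Rightarrow> real \<Rightarrow> real \<Rightarrow> int set \<Rightarrow> bool" where
  "valid_pred_set \<alpha> p0 p1 S \<longleftrightarrow>
     (\<forall>J. compatible p0 p1 J \<longrightarrow>
        measure_pmf.prob J {y. snd y - fst y \<in> S} \<ge> 1 - \<alpha>)"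

end

theory Submission
  imports Defs
begin

text \<open>On \<open>{0,1}\<^sup>2\<close> the observed margins fix \<open>P(Y\<^sub>1=1) - P(Y\<^sub>0=1) = P(ITE=1) - P(ITE=-1)\<close>,
  so every compatible law has \<open>P(ITE=1) \<ge> p\<^sub>1-p\<^sub>0\<close>, \<open>P(ITE=-1) \<ge> p\<^sub>0-p\<^sub>1\<close> and hence
  \<open>P(ITE\<noteq>0) \<ge> \<bar>p\<^sub>1-p\<^sub>0\<bar>\<close>. The comonotone coupling, which puts mass \<open>min p\<^sub>0 p\<^sub>1\<close> on
  \<open>(1,1)\<close> and \<open>1 - max p\<^sub>0 p\<^sub>1\<close> on \<open>(0,0)\<close>, attains the last bound, so \<open>{-1,1}\<close> has
  worst-case coverage exactly \<open>\<bar>p\<^sub>1-p\<^sub>0\<bar>\<close>.\<close>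

lemma measure_pmf_eq_sum_Int:
  assumes "finite F" and "set_pmf J \<subseteq> F"
  shows "measure_pmf.prob J A = sum (pmf J) (A \<inter> F)"
proof -
  have "measure_pmf.prob J A = measure_pmf.prob J (A \<inter> F)"
    using measure_Int_set_pmf[of J A] measure_Int_set_pmf[of J "A \<inter> F"] assms(2)
    by (metis Int_assoc inf.absorb_iff2 inf_commute)
  also have "\<dots> = sum (pmf J) (A \<inter> F)"
    using assms(1) by (simp add: measure_measure_pmf_finite)
  finally show ?thesis .
qed

lemma
  assumes "set_pmf J \<subseteq> {0,1} \<times> {0::int,1}"
  shows prob_fst_eq_1_binary: "measure_pmf.prob J {y. fst y = 1} = pmf J (1,0) + pmf J (1,1)"
    and prob_snd_eq_1_binary: "measure_pmf.prob J {y. snd y = 1} = pmf J (0,1) + pmf J (1,1)"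
    and prob_ITE_pos_binary: "measure_pmf.prob J {y. snd y - fst y \<in> {1}} = pmf J (0,1)"
    and prob_ITE_neg_binary: "measure_pmf.prob J {y. snd y - fst y \<in> {-1}} = pmf J (1,0)"
    and prob_ITE_nonzero_binary:
      "measure_pmf.prob J {y. snd y - fst y \<in> {-1,1}} = pmf J (0,1) + pmf J (1,0)"
proof -
  have prob: "measure_pmf.prob J A = sum (pmf J) (A \<inter> ({0,1} \<times> {0,1}))" for A
    using measure_pmf_eq_sum_Int[OF _ assms] by simp
  have "{y. fst y = 1} \<inter> ({0,1} \<times> {0,1}) = {(1,0), (1::int,1::int)}"
    by auto
  then show "measure_pmf.prob J {y. fst y = 1} = pmf J (1,0) + pmf J (1,1)"
    by (simp add: prob)
  have "{y. snd y = 1} \<inter> ({0,1} \<times> {0,1}) = {(0,1), (1::int,1::int)}"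
    by auto
  then show "measure_pmf.prob J {y. snd y = 1} = pmf J (0,1) + pmf J (1,1)"
    by (simp add: prob)
  have "{y. snd y - fst y \<in> {1}} \<inter> ({0,1} \<times> {0,1}) = {(0::int,1::int)}"
    by auto
  then show "measure_pmf.prob J {y. snd y - fst y \<in> {1}} = pmf J (0,1)"
    by (simp add: prob)
  have "{y. snd y - fst y \<in> {-1}} \<inter> ({0,1} \<times> {0,1}) = {(1::int,0::int)}"
    by auto
  then show "measure_pmf.prob J {y. snd y - fst y \<in> {-1}} = pmf J (1,0)"
    by (simp add: prob)
  have "{y. snd y - fst y \<in> {-1,1}} \<inter> ({0,1} \<times> {0,1}) = {(0,1), (1::int,0::int)}"
    by auto
  then show "measure_pmf.prob J {y. snd y - fst y \<in> {-1,1}} = pmf J (0,1) + pmf J (1,0)"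
    by (simp add: prob)
qed

lemma compatible_pmf_diff:
  assumes "compatible p0 p1 J"
  shows "pmf J (0,1) - pmf J (1,0) = p1 - p0"
  using assms prob_fst_eq_1_binary prob_snd_eq_1_binary unfolding compatible_def by force

lemma
  assumes "compatible p0 p1 J"
  shows compatible_prob_ITE_pos_ge: "measure_pmf.prob J {y. snd y - fst y \<in> {1}} \<ge> p1 - p0"
    and compatible_prob_ITE_neg_ge: "measure_pmf.prob J {y. snd y - fst y \<in> {-1}} \<ge> p0 - p1"
    and compatible_prob_ITE_nonzero_ge:
      "measure_pmf.prob J {y. snd y - fst y \<in> {-1,1}} \<ge> \<bar>p1 - p0\<bar>"
proof -
  have supp: "set_pmf J \<subseteq> {0,1} \<times> {0,1}"
    using assms unfolding compatible_def by simp
  note diff = compatible_pmf_diff[OF assms]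
  show "measure_pmf.prob J {y. snd y - fst y \<in> {1}} \<ge> p1 - p0"
    using diff pmf_nonneg[of J "(1,0)"] prob_ITE_pos_binary[OF supp] by linarith
  show "measure_pmf.prob J {y. snd y - fst y \<in> {-1}} \<ge> p0 - p1"
    using diff pmf_nonneg[of J "(0,1)"] prob_ITE_neg_binary[OF supp] by linarith
  show "measure_pmf.prob J {y. snd y - fst y \<in> {-1,1}} \<ge> \<bar>p1 - p0\<bar>"
    using diff pmf_nonneg[of J "(0,1)"] pmf_nonneg[of J "(1,0)"]
    prob_ITE_nonzero_binary[OF supp] by linarith
qed

definition comonotone_coupling_weights :: "real \<Rightarrow> real \<Rightarrow> ((int \<times> int) \<times> real) list" where
  "comonotone_coupling_weights p0 p1 =
     [((0,0), 1 - max p0 p1), ((0,1), p1 - min p0 p1), ((1,0), p0 - min p0 p1), ((1,1), min p0 p1)]"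

definition comonotone_coupling :: "real \<Rightarrow> real \<Rightarrow> (int \<times> int) pmf" where
  "comonotone_coupling p0 p1 = pmf_of_list (comonotone_coupling_weights p0 p1)"

context
  fixes p0 p1 :: real
  assumes p0: "0 \<le> p0" "p0 \<le> 1" and p1: "0 \<le> p1" "p1 \<le> 1"
begin

private lemma comonotone_coupling_weights_wf: "pmf_of_list_wf (comonotone_coupling_weights p0 p1)"
  using p0 p1 unfolding pmf_of_list_wf_def comonotone_coupling_weights_def by auto

lemma pmf_comonotone_coupling:
  "pmf (comonotone_coupling p0 p1) (0,0) = 1 - max p0 p1"
  "pmf (comonotone_coupling p0 p1) (0,1) = p1 - min p0 p1"
  "pmf (comonotone_coupling p0 p1) (1,0) = p0 - min p0 p1"
  "pmf (comonotone_coupling p0 p1) (1,1) = min p0 p1"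
  unfolding comonotone_coupling_def pmf_pmf_of_list[OF comonotone_coupling_weights_wf]
  by (simp_all add: comonotone_coupling_weights_def)

lemma set_pmf_comonotone_coupling: "set_pmf (comonotone_coupling p0 p1) \<subseteq> {0,1} \<times> {0,1}"
  using set_pmf_of_list[OF comonotone_coupling_weights_wf]
  unfolding comonotone_coupling_def comonotone_coupling_weights_def by auto

lemma compatible_comonotone_coupling: "compatible p0 p1 (comonotone_coupling p0 p1)"
  unfolding compatible_def
  using set_pmf_comonotone_coupling pmf_comonotone_coupling
    prob_fst_eq_1_binary[OF set_pmf_comonotone_coupling]
    prob_snd_eq_1_binary[OF set_pmf_comonotone_coupling]
  by simp

lemma prob_ITE_nonzero_comonotone_coupling:
  "measure_pmf.prob (comonotone_coupling p0 p1) {y. snd y - fst y \<in> {-1,1}} = \<bar>p1 - p0\<bar>"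
  using prob_ITE_nonzero_binary[OF set_pmf_comonotone_coupling] pmf_comonotone_coupling
  by simp

lemma valid_pred_set_ITE_nonzero_iff:
  "valid_pred_set \<alpha> p0 p1 {-1,1} \<longleftrightarrow> 1 - \<alpha> \<le> \<bar>p1 - p0\<bar>"
proof
  assume "valid_pred_set \<alpha> p0 p1 {-1,1}"
  then show "1 - \<alpha> \<le> \<bar>p1 - p0\<bar>"
    using compatible_comonotone_coupling prob_ITE_nonzero_comonotone_coupling
    unfolding valid_pred_set_def by metis
next
  assume "1 - \<alpha> \<le> \<bar>p1 - p0\<bar>"
  then show "valid_pred_set \<alpha> p0 p1 {-1,1}"
    using compatible_prob_ITE_nonzero_ge unfolding valid_pred_set_def by force
qed

end

lemma valid_pred_set_ITE_pos:
  "1 - \<alpha> \<le> p1 - p0 \<Longrightarrow> valid_pred_set \<alpha> p0 p1 {1}"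
  using compatible_prob_ITE_pos_ge unfolding valid_pred_set_def by force

lemma valid_pred_set_ITE_neg:
  "1 - \<alpha> \<le> p0 - p1 \<Longrightarrow> valid_pred_set \<alpha> p0 p1 {-1}"
  using compatible_prob_ITE_neg_ge unfolding valid_pred_set_def by force

theorem mainTheorem7:
  fixes \<alpha> p0 p1 :: real
  assumes "0 < \<alpha>" and "\<alpha> < 1/2"
    and "0 \<le> p0" and "p0 \<le> 1" and "0 \<le> p1" and "p1 \<le> 1"
  shows "(valid_pred_set \<alpha> p0 p1 {-1, 1} \<longleftrightarrow> (p1 - p0 \<ge> 1 - \<alpha> \<or> p0 - p1 \<ge> 1 - \<alpha>))
    \<and> (p1 - p0 \<ge> 1 - \<alpha> \<longrightarrow> valid_pred_set \<alpha> p0 p1 {1})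
    \<and> (p0 - p1 \<ge> 1 - \<alpha> \<longrightarrow> valid_pred_set \<alpha> p0 p1 {-1})"
proof -
  have "1 - \<alpha> \<le> \<bar>p1 - p0\<bar> \<longleftrightarrow> p1 - p0 \<ge> 1 - \<alpha> \<or> p0 - p1 \<ge> 1 - \<alpha>"
    by linarith
  then show ?thesis
    using valid_pred_set_ITE_nonzero_iff[OF assms(3-6)] valid_pred_set_ITE_pos valid_pred_set_ITE_neg
    by blast
qed

end
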